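(* Let $f:\mathcal X\times\mathcal Y\to\{0,1\}$, let $\mu$ be a product distribution on $\mathcal X\times\mathcal Y$, let $\epsilon,\delta\in(0,1)$ and $D>0$ with $\mathrm{srec}^{0,\mu}_{\epsilon,\delta}(f)\le D$. Then for every $\rho\in(0,1)$ there is a rectangle $S$ with $\mu_1(S)\le\rho\,\mu_0(S)$ and $$\mu(S)\ge\mu_0(S)\ge\frac1D\left((1-\epsilon)\mu_0-\frac{\delta}{\rho}\mu_1\right).$$
   Context: A rectangle is $A\times B$ with $A\subseteq\mathcal X,B\subseteq\mathcal Y$; $\mu$ product means $\mu(x,y)=\mu_X(x)\mu_Y(y)$. $\mu_z(R)=\mu(R\cap f^{-1}(z))$, $\mu_z=\mu_z(\mathcal X\times\mathcal Y)$. $\mathrm{srec}^{z,\mu}_{\epsilon,\delta}(f)$ is the optimal value of: minimize $\sum_R w_R$ over $w_R\ge0$ (one per rectangle) subject to $\sum_{(x,y)\in f^{-1}(z)}\mu(x,y)\sum_{R\ni(x,y)}w_R\ge(1-\epsilon)\mu_z$; $\sum_{R\ni(x,y)}w_R\le\delta$ for all $(x,y)\notin f^{-1}(z)$; $\sum_{R\ni(x,y)}w_R\le1$ for all $(x,y)$. *)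

theory Defs
  imports "HOL-Analysis.Analysis"
begin

definition is_distr :: "('a::finite \<Rightarrow> real) \<Rightarrow> bool" where
  "is_distr p \<longleftrightarrow> (\<forall>a. 0 \<le> p a) \<and> (\<Sum>a\<in>UNIV. p a) = 1"

definition rectangles :: "('x \<times> 'y) set set" where
  "rectangles = {A \<times> B | A B. True}"

definition pmeas :: "('x::finite \<Rightarrow> real) \<Rightarrow> ('y::finite \<Rightarrow> real) \<Rightarrow> ('x \<times> 'y) set \<Rightarrow> real" where
  "pmeas muX muY S = (\<Sum>p\<in>S. muX (fst p) * muY (snd p))"

definition zmeas :: "('x::finite \<Rightarrow> 'y::finite \<Rightarrow> nat) \<Rightarrow> ('x \<Rightarrow> real) \<Rightarrow> ('y \<Rightarrow> real) \<Rightarrow> nat \<Rightarrow> ('x \<times> 'y) set \<Rightarrow> real" where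
  "zmeas f muX muY z R = pmeas muX muY (R \<inter> {p. f (fst p) (snd p) = z})"

definition cover :: "(('x::finite \<times> 'y::finite) set \<Rightarrow> real) \<Rightarrow> 'x \<times> 'y \<Rightarrow> real" where
  "cover w p = (\<Sum>R\<in>{R\<in>rectangles. p \<in> R}. w R)"

definition srec_feasible :: "nat \<Rightarrow> ('x::finite \<Rightarrow> real) \<Rightarrow> ('y::finite \<Rightarrow> real) \<Rightarrow> real \<Rightarrow> real \<Rightarrow>
     ('x \<Rightarrow> 'y \<Rightarrow> nat) \<Rightarrow> (('x \<times> 'y) set \<Rightarrow> real) \<Rightarrow> bool" where
  "srec_feasible z muX muY eps del f w \<longleftrightarrow>
     (\<forall>R\<in>rectangles. 0 \<le> w R) \<and>
     (\<Sum>p\<in>{p. f (fst p) (snd p) = z}. muX (fst p) * muY (snd p) * cover w p)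
        \<ge> (1 - eps) * zmeas f muX muY z UNIV \<and>
     (\<forall>p. f (fst p) (snd p) \<noteq> z \<longrightarrow> cover w p \<le> del) \<and>
     (\<forall>p. cover w p \<le> 1)"

text \<open>Optimal value of the LP (the LP is always feasible and bounded below by 0).\<close>
definition srec :: "nat \<Rightarrow> ('x::finite \<Rightarrow> real) \<Rightarrow> ('y::finite \<Rightarrow> real) \<Rightarrow> real \<Rightarrow> real \<Rightarrow>
     ('x \<Rightarrow> 'y \<Rightarrow> nat) \<Rightarrow> real" where
  "srec z muX muY eps del f =
     Inf {(\<Sum>R\<in>rectangles. w R) | w. srec_feasible z muX muY eps del f w}"

end

theory Submission
  imports Defs
begin

text \<open>Let \<open>G\<close> be the set of rectangles \<open>R\<close> with \<open>\<mu>\<^sub>1(R) \<le> \<rho> \<mu>\<^sub>0(R)\<close> and \<open>M\<close> the largest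
  value of \<open>\<mu>\<^sub>0\<close> on \<open>G\<close>. Every rectangle satisfies \<open>\<mu>\<^sub>0(R) - \<mu>\<^sub>1(R)/\<rho> \<le> M\<close>: on \<open>G\<close> because
  \<open>\<mu>\<^sub>0(R) \<le> M\<close>, off \<open>G\<close> because the left side is negative. Exchanging the order of
  summation, the LP constraints of a feasible weighting \<open>w\<close> give
  \<open>(1-\<epsilon>)\<mu>\<^sub>0 - (\<delta>/\<rho>)\<mu>\<^sub>1 \<le> \<Sum>\<^sub>R w\<^sub>R (\<mu>\<^sub>0(R) - \<mu>\<^sub>1(R)/\<rho>) \<le> M \<Sum>\<^sub>R w\<^sub>R\<close>, so the left side is
  at most \<open>M D\<close>, and a maximiser of \<open>\<mu>\<^sub>0\<close> on \<open>G\<close> is the required rectangle.\<close>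

lemma sum_weighted_subset_sums_swap:
  fixes w :: "'a set \<Rightarrow> real" and m :: "'a \<Rightarrow> real"
  assumes "finite Rs" "finite A"
  shows "(\<Sum>R\<in>Rs. w R * (\<Sum>p\<in>R \<inter> A. m p)) = (\<Sum>p\<in>A. m p * (\<Sum>R\<in>{R\<in>Rs. p \<in> R}. w R))"
proof -
  have "(\<Sum>R\<in>Rs. w R * (\<Sum>p\<in>R \<inter> A. m p)) = (\<Sum>R\<in>Rs. \<Sum>p\<in>A. if p \<in> R then w R * m p else 0)"
  proof (rule sum.cong[OF refl])
    fix R
    have "R \<inter> A = {p\<in>A. p \<in> R}" by auto
    then show "w R * (\<Sum>p\<in>R \<inter> A. m p) = (\<Sum>p\<in>A. if p \<in> R then w R * m p else 0)"
      using assms by (simp add: sum.inter_filter sum_distrib_left if_distrib cong: if_cong)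
  qed
  also have "\<dots> = (\<Sum>p\<in>A. \<Sum>R\<in>Rs. if p \<in> R then w R * m p else 0)" by (rule sum.swap)
  also have "\<dots> = (\<Sum>p\<in>A. m p * (\<Sum>R\<in>{R\<in>Rs. p \<in> R}. w R))"
    using assms by (simp add: sum.inter_filter sum_distrib_left mult.commute if_distrib cong: if_cong)
  finally show ?thesis .
qed

lemma finite_rectangles: "finite (rectangles :: ('x::finite \<times> 'y::finite) set set)"
  by (rule finite_subset[OF subset_UNIV]) simp

lemma singleton_in_rectangles: "{p} \<in> rectangles"
  unfolding rectangles_def by (auto intro!: exI[of _ "{fst p}"] exI[of _ "{snd p}"])

lemma sum_weighted_zmeas_eq_sum_cover:
  "(\<Sum>R\<in>rectangles. w R * zmeas f muX muY z R)
     = (\<Sum>p\<in>{p. f (fst p) (snd p) = z}. muX (fst p) * muY (snd p) * cover w p)"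
  unfolding zmeas_def pmeas_def cover_def
  by (rule sum_weighted_subset_sums_swap[OF finite_rectangles]) simp

lemma zmeas_nonneg:
  assumes "is_distr muX" "is_distr muY"
  shows "0 \<le> zmeas f muX muY z R"
  using assms unfolding zmeas_def pmeas_def is_distr_def by (intro sum_nonneg) simp

lemma zmeas_le_pmeas:
  assumes "is_distr muX" "is_distr muY"
  shows "zmeas f muX muY z R \<le> pmeas muX muY R"
  using assms unfolding zmeas_def pmeas_def is_distr_def by (intro sum_mono2) auto

lemma cover_singleton_indicator:
  "cover (\<lambda>R. if \<exists>q\<in>P. R = {q} then 1 else 0) p = (if p \<in> P then 1 else 0)"
proof -
  have "cover (\<lambda>R. if \<exists>q\<in>P. R = {q} then 1 else 0) p
      = (\<Sum>R\<in>{R\<in>rectangles. p \<in> R}. if R = {p} then (if p \<in> P then 1 else 0) else 0)"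
    unfolding cover_def by (rule sum.cong) auto
  also have "\<dots> = (if p \<in> P then 1 else 0)"
    using singleton_in_rectangles[of p] finite_rectangles by (simp add: sum.delta)
  finally show ?thesis .
qed

lemma srec_feasible_singletons:
  assumes "is_distr muX" "is_distr muY" "0 \<le> eps" "0 \<le> del"
  shows "srec_feasible z muX muY eps del f
           (\<lambda>R. if \<exists>q\<in>{p. f (fst p) (snd p) = z}. R = {q} then 1 else 0)"
proof -
  have "0 \<le> eps * zmeas f muX muY z UNIV"
    using assms(3) zmeas_nonneg[OF assms(1,2)] by simp
  then have "(1 - eps) * zmeas f muX muY z UNIV \<le> zmeas f muX muY z UNIV"
    by (simp add: algebra_simps)
  then show ?thesis
    using assms(4) unfolding srec_feasible_def cover_singleton_indicator
    by (simp add: zmeas_def pmeas_def)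
qed

lemma le_mult_srec:
  assumes "0 \<le> M" "srec_feasible z muX muY eps del f w\<^sub>0"
    and "\<And>w. srec_feasible z muX muY eps del f w \<Longrightarrow> c \<le> M * (\<Sum>R\<in>rectangles. w R)"
  shows "c \<le> M * srec z muX muY eps del f"
proof (cases "M = 0")
  case True
  then show ?thesis using assms(2,3) by fastforce
next
  case False
  with assms(1) have M: "0 < M" by simp
  have "c / M \<le> srec z muX muY eps del f"
    unfolding srec_def
  proof (rule cInf_greatest)
    show "{\<Sum>R\<in>rectangles. w R | w. srec_feasible z muX muY eps del f w} \<noteq> {}"
      using assms(2) by blast
  qed (use assms(3) M in \<open>auto simp: divide_simps mult.commute\<close>)
  then show ?thesis using M by (simp add: divide_simps mult.commute)
qed

lemma srec_feasible_gain_bound: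
  assumes feas: "srec_feasible 0 muX muY eps del f w"
    and distr: "is_distr muX" "is_distr muY"
    and rho: "0 < rho" and M: "0 \<le> M"
    and good_le: "\<And>R. R \<in> rectangles \<Longrightarrow> zmeas f muX muY 1 R \<le> rho * zmeas f muX muY 0 R
                         \<Longrightarrow> zmeas f muX muY 0 R \<le> M"
  shows "(1 - eps) * zmeas f muX muY 0 UNIV - (del / rho) * zmeas f muX muY 1 UNIV
           \<le> M * (\<Sum>R\<in>rectangles. w R)"
proof -
  let ?mu = "\<lambda>p. muX (fst p) * muY (snd p)"
  let ?A = "\<lambda>z. {p. f (fst p) (snd p) = z}"
  from feas have w_nonneg: "\<And>R. R \<in> rectangles \<Longrightarrow> 0 \<le> w R"
    and covered: "(1 - eps) * zmeas f muX muY 0 UNIV \<le> (\<Sum>p\<in>?A 0. ?mu p * cover w p)"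
    and off_target: "\<And>p. f (fst p) (snd p) \<noteq> 0 \<Longrightarrow> cover w p \<le> del"
    unfolding srec_feasible_def by auto
  have "(\<Sum>p\<in>?A 1. ?mu p * cover w p) \<le> (\<Sum>p\<in>?A 1. ?mu p * del)"
    using distr by (intro sum_mono mult_left_mono off_target) (auto simp: is_distr_def)
  also have "\<dots> = del * zmeas f muX muY 1 UNIV"
    by (simp add: zmeas_def pmeas_def sum_distrib_left mult.commute)
  finally have spill: "(\<Sum>R\<in>rectangles. w R * zmeas f muX muY 1 R) \<le> del * zmeas f muX muY 1 UNIV"
    by (simp add: sum_weighted_zmeas_eq_sum_cover)
  have gain: "zmeas f muX muY 0 R - zmeas f muX muY 1 R / rho \<le> M" if "R \<in> rectangles" for R
  proof (cases "zmeas f muX muY 1 R \<le> rho * zmeas f muX muY 0 R")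
    case True
    have "0 \<le> zmeas f muX muY 1 R / rho"
      using zmeas_nonneg[OF distr] rho by simp
    then show ?thesis using good_le[OF that True] by linarith
  next
    case False
    then have "zmeas f muX muY 0 R < zmeas f muX muY 1 R / rho" using rho by (simp add: field_simps)
    then show ?thesis using M by linarith
  qed
  have "(1 - eps) * zmeas f muX muY 0 UNIV - (del / rho) * zmeas f muX muY 1 UNIV
      \<le> (\<Sum>R\<in>rectangles. w R * zmeas f muX muY 0 R)
         - (\<Sum>R\<in>rectangles. w R * zmeas f muX muY 1 R) / rho"
    using covered divide_right_mono[OF spill, of rho] rho
    by (simp add: sum_weighted_zmeas_eq_sum_cover)
  also have "\<dots> = (\<Sum>R\<in>rectangles. w R * (zmeas f muX muY 0 R - zmeas f muX muY 1 R / rho))"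
    by (simp add: sum_divide_distrib sum_subtractf right_diff_distrib)
  also have "\<dots> \<le> (\<Sum>R\<in>rectangles. w R * M)"
    using gain w_nonneg by (intro sum_mono mult_left_mono) auto
  finally show ?thesis by (simp add: sum_distrib_left mult.commute)
qed

theorem mainTheorem5:
  fixes f :: "'x::finite \<Rightarrow> 'y::finite \<Rightarrow> nat"
    and muX :: "'x \<Rightarrow> real" and muY :: "'y \<Rightarrow> real"
    and eps del D :: real
  assumes f01: "\<forall>x y. f x y \<in> {0, 1}"
    and distX: "is_distr muX" and distY: "is_distr muY"
    and eps: "0 < eps" "eps < 1"
    and del: "0 < del" "del < 1"
    and D: "0 < D"
    and bound: "srec 0 muX muY eps del f \<le> D"
  shows "\<forall>rho. 0 < rho \<and> rho < 1 \<longrightarrow>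
     (\<exists>S\<in>rectangles.
        zmeas f muX muY 1 S \<le> rho * zmeas f muX muY 0 S \<and>
        pmeas muX muY S \<ge> zmeas f muX muY 0 S \<and>
        zmeas f muX muY 0 S \<ge>
          (1 / D) * ((1 - eps) * zmeas f muX muY 0 UNIV - (del / rho) * zmeas f muX muY 1 UNIV))"
proof (intro allI impI)
  fix rho :: real
  assume rho: "0 < rho \<and> rho < 1"
  define G where "G = {R \<in> rectangles. zmeas f muX muY 1 R \<le> rho * zmeas f muX muY 0 R}"
  have "finite (zmeas f muX muY 0 ` G)" "{} \<in> G"
    using finite_rectangles by (auto simp: G_def rectangles_def zmeas_def pmeas_def)
  then have "Max (zmeas f muX muY 0 ` G) \<in> zmeas f muX muY 0 ` G" by (intro Max_in) auto
  then obtain S where S: "S \<in> G" "zmeas f muX muY 0 S = Max (zmeas f muX muY 0 ` G)" by auto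
  with \<open>finite (zmeas f muX muY 0 ` G)\<close>
  have S_max: "zmeas f muX muY 0 R \<le> zmeas f muX muY 0 S" if "R \<in> G" for R
    using that by simp
  have "(1 - eps) * zmeas f muX muY 0 UNIV - (del / rho) * zmeas f muX muY 1 UNIV
          \<le> zmeas f muX muY 0 S * srec 0 muX muY eps del f"
  proof (rule le_mult_srec)
    show "srec_feasible 0 muX muY eps del f
            (\<lambda>R. if \<exists>q\<in>{p. f (fst p) (snd p) = 0}. R = {q} then 1 else 0)"
      using eps del by (intro srec_feasible_singletons distX distY) auto
    show "0 \<le> zmeas f muX muY 0 S" using distX distY by (rule zmeas_nonneg)
  next
    fix w assume "srec_feasible 0 muX muY eps del f w"
    then show "(1 - eps) * zmeas f muX muY 0 UNIV - (del / rho) * zmeas f muX muY 1 UNIV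
                 \<le> zmeas f muX muY 0 S * (\<Sum>R\<in>rectangles. w R)"
      using distX distY rho S_max zmeas_nonneg[OF distX distY]
      by (intro srec_feasible_gain_bound) (auto simp: G_def)
  qed
  also have "\<dots> \<le> zmeas f muX muY 0 S * D"
    using bound by (intro mult_left_mono zmeas_nonneg distX distY)
  finally have "(1 / D) * ((1 - eps) * zmeas f muX muY 0 UNIV - (del / rho) * zmeas f muX muY 1 UNIV)
                  \<le> zmeas f muX muY 0 S"
    using D by (simp add: divide_simps mult.commute)
  with S(1) zmeas_le_pmeas[OF distX distY] show "\<exists>S\<in>rectangles.
        zmeas f muX muY 1 S \<le> rho * zmeas f muX muY 0 S \<and>
        pmeas muX muY S \<ge> zmeas f muX muY 0 S \<and>
        zmeas f muX muY 0 S \<ge>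
          (1 / D) * ((1 - eps) * zmeas f muX muY 0 UNIV - (del / rho) * zmeas f muX muY 1 UNIV)"
    unfolding G_def by blast
qed

end
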